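(* Let $\lambda_0\in(0,1/2)$ and let $\nu$ be uniformly distributed on $[0,\pi]$, $n_1=\cos\nu$, $n_2=\sin\nu$. Then $$E\left[|n_1|\,n_2^2\arctan\left(\frac{4\lambda_0|n_1|}{4\lambda_0^2-1}\right)\right]=-\frac{\lambda_0}2-\frac23\lambda_0^3.$$
   Context: $\arctan$ denotes the principal branch with values in $(-\pi/2,\pi/2)$. *)

theory Defs
  imports "HOL-Analysis.Analysis"
begin

end

theory Submission
  imports Defs
begin

text \<open>Since arctan is odd, \<open>\<bar>c\<bar> arctan(k\<bar>c\<bar>) = c arctan(k c)\<close>, and
integrating \<open>cos x sin\<^sup>2 x arctan(k cos x)\<close> by parts over \<open>[0, \<pi>]\<close> leaves
\<open>k/3 \<integral> sin\<^sup>4 x / (1 + k\<^sup>2 cos\<^sup>2 x)\<close>. Partial fractions in \<open>cos\<^sup>2 x\<close> reduce this to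
\<open>\<integral> dx / (1 + k\<^sup>2 cos\<^sup>2 x) = \<pi> / b\<close> with \<open>b = \<surd>(1 + k\<^sup>2)\<close>; for
\<open>k = 4\<lambda>\<^sub>0 / (4\<lambda>\<^sub>0\<^sup>2 - 1)\<close> the root is rational, \<open>b = (1 + 4\<lambda>\<^sub>0\<^sup>2) / (1 - 4\<lambda>\<^sub>0\<^sup>2)\<close>.\<close>

lemma weighted_cos_sin_sq_pos:
  fixes b x :: real
  assumes "0 < b"
  shows "0 < b * (cos x)\<^sup>2 + (sin x)\<^sup>2"
proof (cases "cos x = 0")
  case True
  then show ?thesis using sin_cos_squared_add[of x] by simp
next
  case False
  then show ?thesis using assms by (simp add: add_pos_nonneg)
qed

text \<open>A primitive of \<open>b / (b\<^sup>2 cos\<^sup>2 x + sin\<^sup>2 x)\<close> on all of \<open>\<real>\<close>: it is \<open>arctan (tan x / b)\<close>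
made continuous across the poles of \<open>tan\<close>, since
\<open>arctan (tan x / b) - x = arctan ((1 - b) sin x cos x / (b cos\<^sup>2 x + sin\<^sup>2 x))\<close> modulo \<open>\<pi>\<close>.\<close>

definition arctan_tan_div :: "real \<Rightarrow> real \<Rightarrow> real" where
  "arctan_tan_div b x = x + arctan ((1 - b) * sin x * cos x / (b * (cos x)\<^sup>2 + (sin x)\<^sup>2))"

lemma arctan_tan_div_has_real_derivative:
  fixes b x :: real
  assumes "0 < b"
  shows "(arctan_tan_div b has_real_derivative b / (b\<^sup>2 * (cos x)\<^sup>2 + (sin x)\<^sup>2)) (at x)"
proof -
  define c s where "c = cos x" and "s = sin x"
  define D where "D = b * c\<^sup>2 + s\<^sup>2"
  have sc: "s\<^sup>2 + c\<^sup>2 = 1" unfolding c_def s_def by simp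
  have D: "0 < D" unfolding D_def c_def s_def using weighted_cos_sin_sq_pos[OF assms] .
  have E: "0 < b\<^sup>2 * c\<^sup>2 + s\<^sup>2" unfolding c_def s_def using weighted_cos_sin_sq_pos[of "b\<^sup>2"] assms by simp
  have pyth: "D\<^sup>2 + ((1 - b) * s * c)\<^sup>2 = b\<^sup>2 * c\<^sup>2 + s\<^sup>2"
    unfolding D_def using sc by algebra
  have num: "b\<^sup>2 * c\<^sup>2 + s\<^sup>2 + (1 - b) * ((c\<^sup>2 - s\<^sup>2) * D - 2 * (1 - b) * s\<^sup>2 * c\<^sup>2) = b"
    unfolding D_def using sc by algebra
  have "(arctan_tan_div b has_real_derivative
          1 + (1 - b) * ((c\<^sup>2 - s\<^sup>2) * D - 2 * (1 - b) * s\<^sup>2 * c\<^sup>2) / D\<^sup>2 / (1 + ((1 - b) * s * c / D)\<^sup>2)) (at x)"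
    unfolding arctan_tan_div_def[abs_def] c_def s_def D_def
    using D[unfolded D_def c_def s_def]
    by (auto intro!: derivative_eq_intros simp: field_simps power2_eq_square)
  moreover have "1 + (1 - b) * ((c\<^sup>2 - s\<^sup>2) * D - 2 * (1 - b) * s\<^sup>2 * c\<^sup>2) / D\<^sup>2 / (1 + ((1 - b) * s * c / D)\<^sup>2)
      = b / (b\<^sup>2 * c\<^sup>2 + s\<^sup>2)"
  proof -
    define A where "A = (1 - b) * ((c\<^sup>2 - s\<^sup>2) * D - 2 * (1 - b) * s\<^sup>2 * c\<^sup>2)"
    have "1 + ((1 - b) * s * c / D)\<^sup>2 = (b\<^sup>2 * c\<^sup>2 + s\<^sup>2) / D\<^sup>2"
      using D pyth by (simp add: field_simps)
    then have "1 + A / D\<^sup>2 / (1 + ((1 - b) * s * c / D)\<^sup>2) = (b\<^sup>2 * c\<^sup>2 + s\<^sup>2 + A) / (b\<^sup>2 * c\<^sup>2 + s\<^sup>2)"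
      using D E by (simp add: field_simps)
    then show ?thesis using num by (simp add: A_def)
  qed
  ultimately show ?thesis by (simp add: c_def s_def)
qed

definition sin4_primitive :: "real \<Rightarrow> real \<Rightarrow> real \<Rightarrow> real" where
  "sin4_primitive k b x =
     1 / (2 * k\<^sup>2) * (x + sin x * cos x) - (2 * k\<^sup>2 + 1) / k ^ 4 * x + b ^ 3 / k ^ 4 * arctan_tan_div b x"

lemma sin4_primitive_has_real_derivative:
  fixes k b x :: real
  assumes "k \<noteq> 0" and "0 < b" and b: "b\<^sup>2 = 1 + k\<^sup>2"
  shows "(sin4_primitive k b has_real_derivative (sin x) ^ 4 / (1 + k\<^sup>2 * (cos x)\<^sup>2)) (at x)"
proof -
  define c s where "c = cos x" and "s = sin x"
  have sc: "s\<^sup>2 + c\<^sup>2 = 1" unfolding c_def s_def by simp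
  have E: "b\<^sup>2 * c\<^sup>2 + s\<^sup>2 = 1 + k\<^sup>2 * c\<^sup>2" using sc b by algebra
  have E_pos: "0 < 1 + k\<^sup>2 * c\<^sup>2" by (simp add: add_pos_nonneg)
  have lin: "((\<lambda>x. x + sin x * cos x) has_real_derivative 1 + (c * c - s * s)) (at x)"
    unfolding c_def s_def by (auto intro!: derivative_eq_intros)
  have atan: "(arctan_tan_div b has_real_derivative b / (1 + k\<^sup>2 * c\<^sup>2)) (at x)"
    using arctan_tan_div_has_real_derivative[OF \<open>0 < b\<close>, of x] E by (simp add: c_def s_def)
  have "(sin4_primitive k b has_real_derivative
          1 / (2 * k\<^sup>2) * (1 + (c * c - s * s)) - (2 * k\<^sup>2 + 1) / k ^ 4 * 1
            + b ^ 3 / k ^ 4 * (b / (1 + k\<^sup>2 * c\<^sup>2))) (at x)"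
    unfolding sin4_primitive_def[abs_def] by (intro DERIV_add DERIV_diff DERIV_cmult DERIV_ident lin atan)
  moreover have "1 / (2 * k\<^sup>2) * (1 + (c * c - s * s)) - (2 * k\<^sup>2 + 1) / k ^ 4 * 1
      + b ^ 3 / k ^ 4 * (b / (1 + k\<^sup>2 * c\<^sup>2)) = s ^ 4 / (1 + k\<^sup>2 * c\<^sup>2)"
  proof -
    define u where "u = c\<^sup>2"
    define E where "E = 1 + k\<^sup>2 * u"
    have "E \<noteq> 0" using E_pos by (simp add: E_def u_def)
    have double_cos: "1 + (c * c - s * s) = 2 * u" unfolding u_def using sc by algebra
    \<comment> \<open>partial fractions of \<open>(1 - u)\<^sup>2 / (1 + k\<^sup>2 u)\<close>\<close>
    have "(u * k\<^sup>2 - (2 * k\<^sup>2 + 1)) * E + b ^ 4 = k ^ 4 * s ^ 4"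
      unfolding E_def u_def using sc b by algebra
    then show ?thesis
      unfolding double_cos u_def[symmetric] E_def[symmetric]
      using \<open>k \<noteq> 0\<close> \<open>E \<noteq> 0\<close> by (simp add: field_simps) algebra
  qed
  ultimately show ?thesis by (simp add: c_def s_def)
qed

definition cos_sin2_arctan_primitive :: "real \<Rightarrow> real \<Rightarrow> real \<Rightarrow> real" where
  "cos_sin2_arctan_primitive k b x = (sin x) ^ 3 / 3 * arctan (k * cos x) + k / 3 * sin4_primitive k b x"

lemma cos_sin2_arctan_primitive_has_real_derivative:
  fixes k b x :: real
  assumes "k \<noteq> 0" and "0 < b" and "b\<^sup>2 = 1 + k\<^sup>2"
  shows "(cos_sin2_arctan_primitive k b has_real_derivative cos x * (sin x)\<^sup>2 * arctan (k * cos x)) (at x)"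
proof -
  have "0 < 1 + k\<^sup>2 * (cos x)\<^sup>2" by (simp add: add_pos_nonneg)
  then have "((\<lambda>x. (sin x) ^ 3 / 3 * arctan (k * cos x)) has_real_derivative
      (sin x)\<^sup>2 * cos x * arctan (k * cos x) - k / 3 * ((sin x) ^ 4 / (1 + k\<^sup>2 * (cos x)\<^sup>2))) (at x)"
    by (auto intro!: derivative_eq_intros
        simp: field_simps power2_eq_square power3_eq_cube power4_eq_xxxx)
  from DERIV_add[OF this DERIV_cmult[OF sin4_primitive_has_real_derivative[OF assms], of "k / 3"]]
  show ?thesis unfolding cos_sin2_arctan_primitive_def[abs_def] by (simp add: algebra_simps)
qed

lemma integral_cos_sin2_arctan:
  fixes k b :: real
  assumes "k \<noteq> 0" and "0 < b" and "b\<^sup>2 = 1 + k\<^sup>2"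
  shows "(LINT x|lborel. indicator {0..pi} x * (cos x * (sin x)\<^sup>2 * arctan (k * cos x)))
    = pi * (b ^ 3 - 1 - 3/2 * k\<^sup>2) / (3 * k ^ 3)"
proof -
  have "(LINT x|lborel. indicator {0..pi} x *\<^sub>R (cos x * (sin x)\<^sup>2 * arctan (k * cos x)))
      = cos_sin2_arctan_primitive k b pi - cos_sin2_arctan_primitive k b 0"
  proof (rule integral_FTC_atLeastAtMost)
    fix x
    show "(cos_sin2_arctan_primitive k b has_vector_derivative cos x * (sin x)\<^sup>2 * arctan (k * cos x))
        (at x within {0..pi})"
      using cos_sin2_arctan_primitive_has_real_derivative[OF assms, THEN has_field_derivative_at_within]
      by (simp add: has_real_derivative_iff_has_vector_derivative)
  qed (auto intro!: continuous_intros)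
  also have "\<dots> = pi * (b ^ 3 - 1 - 3/2 * k\<^sup>2) / (3 * k ^ 3)"
    using \<open>k \<noteq> 0\<close>
    by (simp add: cos_sin2_arctan_primitive_def sin4_primitive_def arctan_tan_div_def field_simps) algebra
  finally show ?thesis by simp
qed

lemma integral_uniform_measure:
  fixes f :: "'a \<Rightarrow> real"
  assumes "S \<in> sets M" and "emeasure M S = ennreal r" and "0 < r" and "f \<in> borel_measurable M"
  shows "(LINT x|uniform_measure M S. f x) = (LINT x|M. indicator S x * f x) / r"
proof -
  have "(\<lambda>x. indicator S x / emeasure M S) = (\<lambda>x. ennreal (indicator S x / r))"
    using assms(2,3) divide_ennreal[of 1 r] by (auto simp: indicator_def)
  then have "(LINT x|uniform_measure M S. f x) = (LINT x|M. (indicator S x / r) *\<^sub>R f x)"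
    unfolding uniform_measure_def using assms by (simp add: integral_density)
  then show ?thesis by (simp add: mult.commute)
qed

lemma abs_mult_arctan_mult_abs:
  fixes c k :: real
  shows "\<bar>c\<bar> * arctan (k * \<bar>c\<bar>) = c * arctan (k * c)"
  by (cases "0 \<le> c") (auto simp: arctan_minus)

lemma one_plus_sq_param_eq_sq:
  fixes l :: real
  assumes "4 * l\<^sup>2 \<noteq> 1"
  shows "((1 + 4 * l\<^sup>2) / (1 - 4 * l\<^sup>2))\<^sup>2 = 1 + (4 * l / (4 * l\<^sup>2 - 1))\<^sup>2"
proof -
  have "1 - 4 * l\<^sup>2 \<noteq> 0" "4 * l\<^sup>2 - 1 \<noteq> 0" using assms by auto
  then show ?thesis by (simp add: field_simps) algebra
qed

lemma closed_form_param_eq: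
  fixes l :: real
  assumes "0 < l" and "4 * l\<^sup>2 \<noteq> 1"
  shows "(((1 + 4 * l\<^sup>2) / (1 - 4 * l\<^sup>2)) ^ 3 - 1 - 3/2 * (4 * l / (4 * l\<^sup>2 - 1))\<^sup>2)
           / (3 * (4 * l / (4 * l\<^sup>2 - 1)) ^ 3)
    = - l / 2 - 2/3 * l ^ 3"
proof -
  have "1 - 4 * l\<^sup>2 \<noteq> 0" "4 * l\<^sup>2 - 1 \<noteq> 0" using assms by auto
  then show ?thesis using assms(1) by (simp add: field_simps) algebra
qed

theorem lemma9:
  fixes lam0 :: real
  assumes "0 < lam0" and "lam0 < 1/2"
  shows "(LINT \<nu>|uniform_measure lborel {0..pi}.
            \<bar>cos \<nu>\<bar> * (sin \<nu>)\<^sup>2 *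
            arctan (4 * lam0 * \<bar>cos \<nu>\<bar> / (4 * lam0\<^sup>2 - 1)))
         = - lam0 / 2 - 2/3 * lam0 ^ 3"
proof -
  define k where "k = 4 * lam0 / (4 * lam0\<^sup>2 - 1)"
  define b where "b = (1 + 4 * lam0\<^sup>2) / (1 - 4 * lam0\<^sup>2)"
  have "lam0\<^sup>2 < (1/2)\<^sup>2" using assms by (intro power_strict_mono) auto
  then have "4 * lam0\<^sup>2 < 1" by (simp add: power_divide)
  then have "k \<noteq> 0" "0 < b" "b\<^sup>2 = 1 + k\<^sup>2"
    using assms(1) one_plus_sq_param_eq_sq[of lam0] by (auto simp: k_def b_def add_pos_nonneg)
  have integrand: "\<bar>cos \<nu>\<bar> * (sin \<nu>)\<^sup>2 * arctan (4 * lam0 * \<bar>cos \<nu>\<bar> / (4 * lam0\<^sup>2 - 1))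
      = cos \<nu> * (sin \<nu>)\<^sup>2 * arctan (k * cos \<nu>)" for \<nu>
    using abs_mult_arctan_mult_abs[of "cos \<nu>" k] by (simp add: k_def algebra_simps)
  have "(LINT \<nu>|uniform_measure lborel {0..pi}. cos \<nu> * (sin \<nu>)\<^sup>2 * arctan (k * cos \<nu>))
      = (b ^ 3 - 1 - 3/2 * k\<^sup>2) / (3 * k ^ 3)"
    by (subst integral_uniform_measure)
       (auto simp: integral_cos_sin2_arctan[OF \<open>k \<noteq> 0\<close> \<open>0 < b\<close> \<open>b\<^sup>2 = 1 + k\<^sup>2\<close>])
  also have "\<dots> = - lam0 / 2 - 2/3 * lam0 ^ 3"
    unfolding k_def b_def using assms(1) \<open>4 * lam0\<^sup>2 < 1\<close> by (intro closed_form_param_eq) auto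
  finally show ?thesis by (simp add: integrand)
qed

end
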